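(* Let $\varphi:S^1\to S^1$ be an orientation preserving circle homeomorphism with rational rotation number $\varrho=p/q$ ($p,q$ relatively prime) which is semi-periodic, i.e. not conjugate to the rotation $\mathcal{R}_{\varrho}$. Let $\Phi$ be a lift of $\varphi$, $x_0\in\mathbb{R}$, and let $\Gamma=\Gamma(x_0)$ be the curlicue generated by $u_n=\Phi^n(x_0)$. (a) If $\exp(2\pi\imath x_0)$ is a periodic point of $\varphi$, then the following are equivalent: (1) $\frac{1}{q}\sum_{k=0}^{q-1}\exp(2\pi\imath\Phi^k(x_0))=0$; (2) $\Gamma$ is bounded; (3) $\Gamma$ is an equilateral $q$-polygon (i.e. $z_q=z_0$). Moreover, $\Gamma$ (bounded or not) is not superficial, and $\Gamma$ is a regular polygon if and only if the displacements $\Phi^k(x_0)-\Phi^{k-1}(x_0)\bmod 1$, $k\ge1$, along the periodic orbit are all equal. (b) If $\exp(2\pi\imath x_0)$ is not a periodic point of $\varphi$ and $\Gamma$ is bounded, then $\Gamma$ is superficial.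
   Context: Identify $S^1=\mathbb{R}/\mathbb{Z}$ via $x\mapsto\exp(2\pi\imath x)$; a lift of $\varphi$ is a homeomorphism $\Phi:\mathbb{R}\to\mathbb{R}$ with $\Phi(x+1)=\Phi(x)+1$ projecting to $\varphi$. For a real sequence $u=(u_n)_{n\ge0}$, the curlicue $\Gamma(u)$ is the piecewise linear curve in $\mathbb{C}$ passing consecutively through $z_0=0$ and $z_n=\sum_{k=0}^{n-1}\exp(2\pi\imath u_k)$, $n\ge1$. A regular polygon is an equilateral and equiangular closed polygon, possibly self-intersecting (convex or star). For $t>0$, $\Gamma_t$ is the initial part of $\Gamma$ of length $t$ and $\Gamma^{\varepsilon}=\{y:\exists x\in\Gamma,|x-y|<\varepsilon\}$. An unbounded curve is superficial if $\lim_{t\to\infty}t/\mathrm{Diam}\,\Gamma_t=\infty$; a bounded curve is superficial if $\lim_{\varepsilon\to0}\mathrm{Area}(\Gamma^{\varepsilon})/\varepsilon=\infty$ (Area = 2-dimensional Lebesgue measure). *)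

theory Defs
  imports "HOL-Analysis.Analysis"
begin

definition circ :: "real \<Rightarrow> complex" where
  "circ x = exp (2 * pi * \<i> * complex_of_real x)"

definition is_oplift :: "(complex \<Rightarrow> complex) \<Rightarrow> (real \<Rightarrow> real) \<Rightarrow> bool" where
  "is_oplift \<phi> \<Phi> \<longleftrightarrow>
     (\<exists>\<Psi>. homeomorphism UNIV UNIV \<Phi> \<Psi>) \<and> (\<forall>x. \<Phi> (x + 1) = \<Phi> x + 1) \<and>
     (\<forall>x. \<phi> (circ x) = circ (\<Phi> x)) \<and> strict_mono \<Phi>"

definition rotation_number :: "(real \<Rightarrow> real) \<Rightarrow> real" where
  "rotation_number \<Phi> = frac (lim (\<lambda>n. (\<Phi> ^^ n) 0 / real n))"

definition rot :: "real \<Rightarrow> complex \<Rightarrow> complex" where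
  "rot \<rho> z = circ \<rho> * z"

definition conj_to_rotation :: "(complex \<Rightarrow> complex) \<Rightarrow> real \<Rightarrow> bool" where
  "conj_to_rotation \<phi> \<rho> \<longleftrightarrow>
     (\<exists>h h'. homeomorphism (sphere 0 1) (sphere 0 1) h h' \<and>
        (\<forall>z\<in>sphere 0 1. h (\<phi> z) = rot \<rho> (h z)))"

definition periodic_point :: "(complex \<Rightarrow> complex) \<Rightarrow> complex \<Rightarrow> bool" where
  "periodic_point \<phi> z \<longleftrightarrow> (\<exists>n>0. (\<phi> ^^ n) z = z)"

definition curl_pt :: "(nat \<Rightarrow> real) \<Rightarrow> nat \<Rightarrow> complex" where
  "curl_pt u n = (\<Sum>k<n. circ (u k))"

definition curlicue :: "(nat \<Rightarrow> real) \<Rightarrow> complex set" where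
  "curlicue u = (\<Union>n. closed_segment (curl_pt u n) (curl_pt u (Suc n)))"

definition curl_path :: "(nat \<Rightarrow> real) \<Rightarrow> real \<Rightarrow> complex" where
  "curl_path u s = curl_pt u (nat \<lfloor>s\<rfloor>) + complex_of_real (s - of_int \<lfloor>s\<rfloor>) * circ (u (nat \<lfloor>s\<rfloor>))"

text \<open>Initial part of length t (edges have unit length).\<close>
definition curl_init :: "(nat \<Rightarrow> real) \<Rightarrow> real \<Rightarrow> complex set" where
  "curl_init u t = curl_path u ` {0..t}"

definition nbhd :: "complex set \<Rightarrow> real \<Rightarrow> complex set" where
  "nbhd S \<epsilon> = {y. \<exists>x\<in>S. dist x y < \<epsilon>}"

definition superficial :: "(nat \<Rightarrow> real) \<Rightarrow> bool" where
  "superficial u \<longleftrightarrow>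
     (if bounded (curlicue u)
      then filterlim (\<lambda>\<epsilon>. measure lebesgue (nbhd (curlicue u) \<epsilon>) / \<epsilon>) at_top (at_right 0)
      else filterlim (\<lambda>t. t / diameter (curl_init u t)) at_top at_top)"

text \<open>The curlicue is a regular polygon: closed (periodic vertex sequence), equilateral
  (automatic: unit edges) and equiangular (constant signed turning between consecutive edges).\<close>
definition regular_polygon :: "(nat \<Rightarrow> real) \<Rightarrow> bool" where
  "regular_polygon u \<longleftrightarrow>
     (\<exists>m>0. \<forall>n. curl_pt u (n + m) = curl_pt u n) \<and>
     (\<exists>c. \<forall>n. circ (u (Suc n)) = c * circ (u n))"

end

theory Submission
  imports Defs
begin

text \<open>Write \<open>u n = (\<Phi> ^^ n) x0\<close> and \<open>z n = curl_pt u n\<close>.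
  If \<open>circ x0\<close> is periodic, a periodic orbit of a lift with rotation number \<open>p / q\<close>,
  \<open>coprime p q\<close>, has period exactly \<open>q\<close>; so the directions \<open>circ (u n)\<close> are \<open>q\<close>-periodic and
  \<open>z (n + j * q) = z n + j * z q\<close>.  Hence the curlicue is bounded iff \<open>z q = 0\<close>, and then it is a
  closed \<open>q\<close>-gon whose \<open>\<epsilon>\<close>-neighbourhood has area \<open>O(\<epsilon>)\<close>; otherwise its diameter grows
  linearly with its length.  It is a regular polygon iff the turning \<open>circ (u (n + 1) - u n)\<close> is
  constant, and it then closes up because that constant is a \<open>q\<close>-th root of unity other than \<open>1\<close>.

  If \<open>circ x0\<close> is not periodic, the directions are pairwise distinct, so for every \<open>M\<close> the curve
  contains \<open>M\<close> pairwise nonparallel unit edges.  Their \<open>\<epsilon>\<close>-neighbourhood contains about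
  \<open>M / (4 \<epsilon>)\<close> disjoint \<open>\<epsilon>\<close>-discs, so its area is at least about \<open>M \<pi> \<epsilon> / 4\<close>, and as \<open>M\<close> is
  arbitrary the area divided by \<open>\<epsilon>\<close> tends to infinity.\<close>

section \<open>Lifts of circle homeomorphisms\<close>

lemma circ_add: "circ (x + y) = circ x * circ y"
  unfolding circ_def by (simp add: distrib_left exp_add)

lemma circ_of_int [simp]: "circ (of_int k) = 1"
proof -
  have "circ (of_int k) = exp (complex_of_real (real_of_int (2 * k) * pi) * \<i>)"
    unfolding circ_def by (simp add: mult.commute mult.left_commute)
  also have "\<dots> = exp 0"
    by (subst exp_eq) (rule exI[of _ k], simp)
  finally show ?thesis by simp
qed

lemma circ_add_of_int [simp]: "circ (x + of_int k) = circ x"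
  by (simp add: circ_add)

lemma norm_circ [simp]: "norm (circ x) = 1"
  unfolding circ_def by simp

lemma circ_neq_0 [simp]: "circ x \<noteq> 0"
  unfolding circ_def by simp

lemma circ_diff: "circ (x - y) = circ x / circ y"
  using circ_add[of "x - y" y] by (simp add: field_simps)

lemma circ_eq_iff: "circ x = circ y \<longleftrightarrow> (\<exists>k::int. x = y + of_int k)"
proof
  assume "circ x = circ y"
  then obtain n where "2 * pi * \<i> * complex_of_real x =
      2 * pi * \<i> * complex_of_real y + complex_of_real (real_of_int (2 * n) * pi) * \<i>"
    unfolding circ_def exp_eq by blast
  then have "complex_of_real (x * (2 * pi)) = complex_of_real ((y + of_int n) * (2 * pi))"
    by (simp add: algebra_simps complex_eq_iff)
  then have "x = y + of_int n"
    using of_real_eq_iff pi_gt_zero by (metis mult_cancel_right2 pi_neq_zero mult_right_cancel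
        zero_neq_numeral mult_eq_0_iff)
  then show "\<exists>k::int. x = y + of_int k" ..
qed auto

lemma frac_eq_iff_circ_eq: "frac x = frac y \<longleftrightarrow> circ x = circ y"
  by (metis circ_eq_iff frac_add_of_int_right frac_eqE)

lemma strict_mono_funpow_fixed_point:
  fixes T :: "'a::linorder \<Rightarrow> 'a"
  assumes T: "strict_mono T" and n: "n > 0" and periodic: "(T ^^ n) x = x"
  shows "T x = x"
proof -
  have below: "(T ^^ Suc k) x < x" if "T x < x" for k
    by (induction k) (use that in \<open>auto dest: strict_monoD[OF T]\<close>)
  have above: "(T ^^ Suc k) x > x" if "T x > x" for k
    by (induction k) (use that in \<open>auto dest: strict_monoD[OF T]\<close>)
  obtain k where "n = Suc k" using n gr0_conv_Suc by blast
  with below above periodic show ?thesis by (metis less_irrefl linorder_neqE)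
qed

lemma LIMSEQ_divide_of_nat_if_bounded_deviation:
  fixes f :: "nat \<Rightarrow> real"
  assumes dev: "\<And>k. \<bar>f k - real k * r\<bar> \<le> C"
  shows "(\<lambda>k. f k / real k) \<longlonglongrightarrow> r"
proof -
  have "(\<lambda>k. f k / real k - r) \<longlonglongrightarrow> 0"
  proof (rule Lim_null_comparison)
    show "\<forall>\<^sub>F k in sequentially. norm (f k / real k - r) \<le> C * (1 / real k)"
    proof (rule eventually_sequentiallyI[of 1])
      fix k :: nat assume "1 \<le> k"
      then have "f k / real k - r = (f k - real k * r) / real k" by (simp add: field_simps)
      then show "norm (f k / real k - r) \<le> C * (1 / real k)"
        using dev[of k] by (simp add: divide_right_mono)
    qed
    show "(\<lambda>k. C * (1 / real k)) \<longlonglongrightarrow> 0"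
      using tendsto_mult[OF tendsto_const lim_inverse_n'] by simp
  qed
  then show ?thesis using Lim_null by blast
qed

locale circle_lift =
  fixes \<phi> :: "complex \<Rightarrow> complex" and \<Phi> :: "real \<Rightarrow> real"
  assumes strict_mono_lift: "strict_mono \<Phi>"
    and lift_add_1: "\<And>x. \<Phi> (x + 1) = \<Phi> x + 1"
    and lift_circ: "\<And>x. \<phi> (circ x) = circ (\<Phi> x)"
begin

lemma lift_add_of_int: "\<Phi> (x + of_int k) = \<Phi> x + of_int k"
proof -
  have add_nat: "\<Phi> (y + of_nat n) = \<Phi> y + of_nat n" for y n
    by (induction n arbitrary: y) (simp_all add: lift_add_1 flip: add.assoc)
  show ?thesis
  proof (cases "k \<ge> 0")
    case True
    then show ?thesis using add_nat[of x "nat k"] by simp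
  next
    case False
    then show ?thesis using add_nat[of "x + of_int k" "nat (- k)"] by simp
  qed
qed

lemma funpow_add_of_int: "(\<Phi> ^^ n) (x + of_int k) = (\<Phi> ^^ n) x + of_int k"
  by (induction n arbitrary: x) (simp_all add: lift_add_of_int)

lemma funpow_diff_of_int: "(\<Phi> ^^ n) (x - of_int k) = (\<Phi> ^^ n) x - of_int k"
  using funpow_add_of_int[of n x "- k"] by simp

lemma strict_mono_funpow: "strict_mono (\<Phi> ^^ n)"
  by (induction n) (auto simp: strict_mono_def strict_monoD[OF strict_mono_lift])

lemma funpow_circ: "(\<phi> ^^ n) (circ x) = circ ((\<Phi> ^^ n) x)"
  by (induction n) (simp_all add: lift_circ)

lemma periodic_point_circ_iff:
  "periodic_point \<phi> (circ x) \<longleftrightarrow> (\<exists>n>0. \<exists>m::int. (\<Phi> ^^ n) x = x + of_int m)"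
  unfolding periodic_point_def funpow_circ circ_eq_iff by blast

lemma funpow_displacement_close: "\<bar>((\<Phi> ^^ k) x - x) - ((\<Phi> ^^ k) y - y)\<bar> \<le> 1"
proof -
  define j where "j = \<lfloor>x - y\<rfloor>"
  have "y + of_int j \<le> x" "x \<le> y + of_int (j + 1)"
    unfolding j_def by linarith+
  then have "(\<Phi> ^^ k) (y + of_int j) \<le> (\<Phi> ^^ k) x" "(\<Phi> ^^ k) x \<le> (\<Phi> ^^ k) (y + of_int (j + 1))"
    by (simp_all only: strict_mono_less_eq[OF strict_mono_funpow])
  then show ?thesis using \<open>y + of_int j \<le> x\<close> \<open>x \<le> y + of_int (j + 1)\<close>
    unfolding funpow_add_of_int by simp
qed

lemma funpow_periodic:
  assumes "(\<Phi> ^^ n) x = x + of_int m"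
  shows "(\<Phi> ^^ (n * a + b)) x = (\<Phi> ^^ b) x + real a * of_int m"
proof (induction a)
  case (Suc a)
  have "(\<Phi> ^^ (n * Suc a + b)) x = (\<Phi> ^^ ((n * a + b) + n)) x"
    by (simp add: algebra_simps)
  also have "\<dots> = (\<Phi> ^^ (n * a + b)) (x + of_int m)"
    by (simp add: funpow_add assms)
  also have "\<dots> = (\<Phi> ^^ b) x + real (Suc a) * of_int m"
    using Suc by (simp add: funpow_add_of_int algebra_simps)
  finally show ?case .
qed simp

lemma rotation_number_of_periodic:
  assumes n: "n > 0" and m: "(\<Phi> ^^ n) x = x + of_int m"
  shows "rotation_number \<Phi> = frac (of_int m / real n)"
proof -
  define C where "C = Max ((\<lambda>b. \<bar>(\<Phi> ^^ b) x - x - real b * (m / n)\<bar>) ` {..<n})"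
  have "\<bar>(\<Phi> ^^ k) 0 - real k * (m / n)\<bar> \<le> C + 1" for k
  proof -
    define a b where "a = k div n" and "b = k mod n"
    have "b < n" unfolding b_def using n by simp
    then have "\<bar>(\<Phi> ^^ b) x - x - real b * (m / n)\<bar> \<le> C"
      unfolding C_def by (intro Max_ge) auto
    moreover have "k = n * a + b" unfolding a_def b_def by simp
    then have "(\<Phi> ^^ k) x - real k * (m / n) = (\<Phi> ^^ b) x - real b * (m / n)"
      using funpow_periodic[OF m, of a b] n by (simp add: field_simps)
    moreover have "\<bar>((\<Phi> ^^ k) 0 - 0) - ((\<Phi> ^^ k) x - x)\<bar> \<le> 1"
      by (rule funpow_displacement_close)
    ultimately show ?thesis by (simp add: abs_le_iff)
  qed
  then have "(\<lambda>k. (\<Phi> ^^ k) 0 / real k) \<longlonglongrightarrow> m / n"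
    by (rule LIMSEQ_divide_of_nat_if_bounded_deviation)
  then show ?thesis unfolding rotation_number_def by (simp add: limI)
qed

text \<open>\<open>(\<Phi> ^^ n) - c\<close> is strictly increasing, and a strictly increasing map has no periodic
  points other than its fixed points.\<close>
lemma funpow_translation_root:
  assumes r: "r > 0" and iterate: "(\<Phi> ^^ (n * r)) x = x + of_int (int r * c)"
  shows "(\<Phi> ^^ n) x = x + of_int c"
proof -
  define T where "T y = (\<Phi> ^^ n) y - of_int c" for y
  have "strict_mono T"
    using strict_mono_funpow[of n] unfolding T_def strict_mono_def by simp
  have T_iter: "(T ^^ j) y = (\<Phi> ^^ (n * j)) y - of_int (int j * c)" for j y
  proof (induction j)
    case (Suc j)
    have "(T ^^ Suc j) y = (\<Phi> ^^ n) ((\<Phi> ^^ (n * j)) y - of_int (int j * c)) - of_int c"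
      by (simp only: funpow.simps(2) comp_apply Suc.IH T_def)
    also have "\<dots> = (\<Phi> ^^ (n + n * j)) y - of_int (int (Suc j) * c)"
      using funpow_diff_of_int[of n "(\<Phi> ^^ (n * j)) y" "int j * c"]
      by (simp add: funpow_add algebra_simps)
    finally show ?case by simp
  qed simp
  then have "(T ^^ r) x = x"
    using iterate by simp
  then have "T x = x"
    by (rule strict_mono_funpow_fixed_point[OF \<open>strict_mono T\<close> r])
  then show ?thesis
    unfolding T_def by (simp add: algebra_simps)
qed

lemma inj_circ_orbit:
  assumes "\<not> periodic_point \<phi> (circ x)"
  shows "inj (\<lambda>n. circ ((\<Phi> ^^ n) x))"
proof (rule linorder_injI)
  fix i j :: nat
  assume "i < j"
  show "circ ((\<Phi> ^^ i) x) \<noteq> circ ((\<Phi> ^^ j) x)"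
  proof
    assume "circ ((\<Phi> ^^ i) x) = circ ((\<Phi> ^^ j) x)"
    then obtain m where "(\<Phi> ^^ j) x = (\<Phi> ^^ i) x + of_int m"
      using circ_eq_iff by metis
    moreover have "(\<Phi> ^^ j) x = (\<Phi> ^^ i) ((\<Phi> ^^ (j - i)) x)"
      using \<open>i < j\<close> by (metis funpow_add comp_apply le_add_diff_inverse less_imp_le)
    ultimately have "(\<Phi> ^^ i) ((\<Phi> ^^ (j - i)) x) = (\<Phi> ^^ i) (x + of_int m)"
      by (simp add: funpow_add_of_int)
    then have "(\<Phi> ^^ (j - i)) x = x + of_int m"
      using strict_mono_eq[OF strict_mono_funpow] by blast
    with \<open>i < j\<close> assms show False
      unfolding periodic_point_circ_iff by (meson zero_less_diff)
  qed
qed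

end

locale rational_circle_lift = circle_lift +
  fixes p q :: nat
  assumes q_pos: "q > 0" and coprime_p_q: "coprime p q"
    and rotation_number_eq: "rotation_number \<Phi> = real p / real q"
begin

lemma periodic_orbit_period:
  assumes n: "n > 0" and m: "(\<Phi> ^^ n) x = x + of_int m"
  shows "q dvd n" and "\<exists>c::int. (\<Phi> ^^ q) x = x + of_int c"
proof -
  define f where "f = \<lfloor>of_int m / real n\<rfloor>"
  define c where "c = int p + int q * f"
  have "of_int m / real n = real p / real q + of_int f"
    using rotation_number_of_periodic[OF n m] rotation_number_eq unfolding f_def frac_def by simp
  then have "real_of_int (m * int q) = real_of_int (int n * c)"
    using n q_pos unfolding c_def by (simp add: field_simps)
  then have mc: "m * int q = int n * c"
    by (simp only: of_int_eq_iff)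
  have "coprime (int q) c"
    using coprime_p_q gcd_add_mult[of "int q" f "int p"]
    unfolding c_def coprime_iff_gcd_eq_1 by (simp add: gcd.commute algebra_simps)
  moreover have "int q dvd int n * c"
    using mc by (metis dvd_triv_right)
  ultimately show "q dvd n"
    by (simp add: coprime_dvd_mult_left_iff)
  then obtain r where r: "n = q * r" ..
  have "m = int r * c"
    using mc q_pos by (simp add: r algebra_simps)
  with m r n show "\<exists>c::int. (\<Phi> ^^ q) x = x + of_int c"
    using funpow_translation_root[of r q x c] by auto
qed

lemma circ_orbit_periodic:
  assumes "periodic_point \<phi> (circ x)"
  shows "circ ((\<Phi> ^^ (k + q)) x) = circ ((\<Phi> ^^ k) x)"
proof -
  obtain n m where "n > 0" "(\<Phi> ^^ n) x = x + of_int m"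
    using assms periodic_point_circ_iff by blast
  then obtain c where "(\<Phi> ^^ q) x = x + of_int c"
    using periodic_orbit_period(2) by blast
  then show ?thesis by (simp add: funpow_add funpow_add_of_int)
qed

lemma circ_lift_neq:
  assumes "q \<ge> 2"
  shows "circ (\<Phi> x) \<noteq> circ x"
proof
  assume "circ (\<Phi> x) = circ x"
  then obtain m where "(\<Phi> ^^ 1) x = x + of_int m"
    using circ_eq_iff by auto
  then have "q dvd 1"
    by (rule periodic_orbit_period(1)[rotated]) simp
  with assms show False by simp
qed

end

section \<open>Curlicues and their neighbourhoods\<close>

lemma curl_pt_0 [simp]: "curl_pt u 0 = 0"
  unfolding curl_pt_def by simp

lemma curl_pt_Suc: "curl_pt u (Suc n) = curl_pt u n + circ (u n)"
  unfolding curl_pt_def by simp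

lemma norm_curl_pt_le: "norm (curl_pt u n) \<le> real n"
  unfolding curl_pt_def using norm_sum[of "\<lambda>k. circ (u k)" "{..<n}"] by simp

lemma edge_point_in_curlicue:
  assumes "0 \<le> s" "s \<le> 1"
  shows "curl_pt u n + of_real s * circ (u n) \<in> curlicue u"
proof -
  have "curl_pt u n + of_real s * circ (u n) = (1 - s) *\<^sub>R curl_pt u n + s *\<^sub>R curl_pt u (Suc n)"
    by (simp add: curl_pt_Suc scaleR_conv_of_real algebra_simps)
  then have "curl_pt u n + of_real s * circ (u n) \<in> closed_segment (curl_pt u n) (curl_pt u (Suc n))"
    unfolding in_segment(1) using assms by (intro exI[of _ s]) simp
  then show ?thesis
    unfolding curlicue_def by blast
qed

lemma curl_pt_in_curlicue: "curl_pt u n \<in> curlicue u"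
  using edge_point_in_curlicue[of 0 u n] by simp

lemma curl_path_of_nat [simp]: "curl_path u (real n) = curl_pt u n"
  unfolding curl_path_def by simp

lemma curl_pt_in_curl_init: "real n \<le> t \<Longrightarrow> curl_pt u n \<in> curl_init u t"
  unfolding curl_init_def by (rule image_eqI[of _ _ "real n"]) auto

lemma norm_curl_path_le:
  assumes "s \<ge> 0"
  shows "norm (curl_path u s) \<le> s + 1"
proof -
  have "norm (curl_path u s) \<le>
      norm (curl_pt u (nat \<lfloor>s\<rfloor>)) + norm (of_real (s - of_int \<lfloor>s\<rfloor>) * circ (u (nat \<lfloor>s\<rfloor>)))"
    unfolding curl_path_def by (rule norm_triangle_ineq)
  also have "\<dots> = norm (curl_pt u (nat \<lfloor>s\<rfloor>)) + \<bar>s - of_int \<lfloor>s\<rfloor>\<bar>"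
    by (simp only: norm_mult norm_circ norm_of_real mult_1_right)
  also have "\<dots> \<le> real (nat \<lfloor>s\<rfloor>) + 1"
    using norm_curl_pt_le[of u "nat \<lfloor>s\<rfloor>"] floor_correct[of s] by linarith
  also have "\<dots> \<le> s + 1"
    using assms by linarith
  finally show ?thesis .
qed

lemma bounded_curl_init: "bounded (curl_init u t)"
proof -
  have "curl_init u t \<subseteq> cball 0 (\<bar>t\<bar> + 1)"
  proof
    fix z assume "z \<in> curl_init u t"
    then obtain s where "s \<in> {0..t}" "z = curl_path u s"
      unfolding curl_init_def by blast
    then show "z \<in> cball 0 (\<bar>t\<bar> + 1)"
      using norm_curl_path_le[of s u] by auto
  qed
  then show ?thesis
    using bounded_cball bounded_subset by blast
qed

lemma nbhd_UN: "nbhd (\<Union>i\<in>I. S i) e = (\<Union>i\<in>I. nbhd (S i) e)"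
  unfolding nbhd_def by blast

lemma open_nbhd: "open (nbhd S e)"
proof -
  have "nbhd S e = (\<Union>x\<in>S. ball x e)"
    unfolding nbhd_def by auto
  then show ?thesis by auto
qed

lemma bounded_nbhd:
  assumes "bounded S"
  shows "bounded (nbhd S e)"
proof -
  obtain B where B: "\<And>x. x \<in> S \<Longrightarrow> norm x \<le> B"
    using assms unfolding bounded_iff by blast
  have "nbhd S e \<subseteq> cball 0 (B + e)"
  proof
    fix y assume "y \<in> nbhd S e"
    then obtain x where "x \<in> S" "dist x y < e"
      unfolding nbhd_def by blast
    then show "y \<in> cball 0 (B + e)"
      using B[of x] norm_triangle_ineq2[of y x] by (simp add: dist_norm norm_minus_commute)
  qed
  then show ?thesis
    using bounded_cball bounded_subset by blast
qed

lemma lmeasurable_nbhd: "bounded S \<Longrightarrow> nbhd S e \<in> lmeasurable"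
  by (intro lmeasurable_open bounded_nbhd open_nbhd)

lemma measure_ball_complex: "0 \<le> r \<Longrightarrow> measure lebesgue (ball (c::complex) r) = r\<^sup>2 * pi"
  using content_ball[where c=c and r=r] by (simp add: measure_completion unit_ball_vol_2)

lemma nbhd_unit_segment_subset:
  assumes e: "e > 0" and ab: "norm (b - a) = 1" and N: "N = nat \<lceil>1 / e\<rceil>"
  shows "nbhd (closed_segment a b) e \<subseteq> (\<Union>k\<le>N. ball (a + (real k / real N) *\<^sub>R (b - a)) (2 * e))"
proof
  fix y assume "y \<in> nbhd (closed_segment a b) e"
  then obtain x where x: "x \<in> closed_segment a b" "dist x y < e"
    unfolding nbhd_def by blast
  then obtain s where s: "0 \<le> s" "s \<le> 1" "x = a + s *\<^sub>R (b - a)"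
    unfolding in_segment(1) by (auto simp: algebra_simps)
  have N_ge: "real N \<ge> 1 / e"
    unfolding N by linarith
  then have N_pos: "real N > 0"
    using e by (smt (verit) divide_pos_pos)
  define k where "k = nat \<lfloor>s * real N\<rfloor>"
  have k: "real k \<le> s * real N" "s * real N < real k + 1"
    unfolding k_def using s N_pos by auto
  have "s * real N \<le> real N"
    using s N_pos by (simp add: mult_left_le_one_le)
  then have "k \<le> N"
    using k by linarith
  have "\<bar>s - real k / real N\<bar> = \<bar>s * real N - real k\<bar> / real N"
    using N_pos by (simp add: field_simps)
  also have "\<dots> \<le> 1 / real N"
    using k N_pos by (intro divide_right_mono) auto
  also have "\<dots> \<le> e"
    using N_ge e N_pos by (simp add: field_simps)
  finally have "dist x (a + (real k / real N) *\<^sub>R (b - a)) \<le> e"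
    using ab by (simp add: s(3) dist_norm flip: scaleR_diff_left)
  then have "dist (a + (real k / real N) *\<^sub>R (b - a)) y < 2 * e"
    using x(2) dist_triangle[of "a + (real k / real N) *\<^sub>R (b - a)" y x] by (simp add: dist_commute)
  with \<open>k \<le> N\<close> show "y \<in> (\<Union>k\<le>N. ball (a + (real k / real N) *\<^sub>R (b - a)) (2 * e))"
    by auto
qed

lemma measure_nbhd_unit_segment_le:
  assumes e: "0 < e" "e \<le> 1" and ab: "norm (b - a) = 1"
  shows "measure lebesgue (nbhd (closed_segment a b) e) \<le> 12 * pi * e"
proof -
  define N where "N = nat \<lceil>1 / e\<rceil>"
  define c where "c k = a + (real k / real N) *\<^sub>R (b - a)" for k
  have "(\<Union>k\<le>N. ball (c k) (2 * e)) \<in> lmeasurable"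
    by (intro lmeasurable_open bounded_UN open_UN) auto
  then have "measure lebesgue (nbhd (closed_segment a b) e) \<le> measure lebesgue (\<Union>k\<le>N. ball (c k) (2 * e))"
    using nbhd_unit_segment_subset[OF e(1) ab N_def]
    by (intro measure_mono_fmeasurable)
      (auto simp: c_def intro: fmeasurableD[OF lmeasurable_nbhd[OF bounded_closed_segment]])
  also have "\<dots> \<le> (\<Sum>k\<le>N. measure lebesgue (ball (c k) (2 * e)))"
    by (intro measure_UNION_le) auto
  also have "\<dots> = (real N + 1) * (4 * e\<^sup>2 * pi)"
  proof -
    have "measure lebesgue (ball (c k) (2 * e)) = 4 * e\<^sup>2 * pi" for k
      using measure_ball_complex[of "2 * e" "c k"] e by (simp add: power_mult_distrib)
    then show ?thesis by (simp only: sum_constant card_atMost) simp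
  qed
  also have "\<dots> \<le> 3 / e * (4 * e\<^sup>2 * pi)"
  proof -
    have "real N = of_int \<lceil>1 / e\<rceil>"
      unfolding N_def using e by simp
    then have "real N \<le> 1 / e + 1"
      using ceiling_correct[of "1 / e"] by linarith
    moreover have "1 \<le> 1 / e"
      using e by (simp add: field_simps)
    ultimately show ?thesis
      by (intro mult_right_mono) auto
  qed
  also have "\<dots> = 12 * pi * e"
    using e by (simp add: field_simps power2_eq_square)
  finally show ?thesis .
qed

lemma not_filterlim_at_top_if_eventually_le:
  fixes f :: "'a \<Rightarrow> real"
  assumes "\<forall>\<^sub>F x in F. f x \<le> K" and "F \<noteq> bot"
  shows "\<not> filterlim f at_top F"
proof
  assume "filterlim f at_top F"
  then have "\<forall>\<^sub>F x in F. K + 1 \<le> f x"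
    unfolding filterlim_at_top by blast
  with assms(1) have "\<forall>\<^sub>F x in F. False"
    by (auto elim: eventually_elim2)
  with assms(2) show False
    by (simp add: eventually_False)
qed

section \<open>Curlicues with periodic directions\<close>

locale periodic_curlicue =
  fixes u :: "nat \<Rightarrow> real" and q :: nat
  assumes period_pos: "q > 0" and circ_period: "\<And>n. circ (u (n + q)) = circ (u n)"
begin

lemma curl_pt_add_mult_period: "curl_pt u (n + j * q) = curl_pt u n + of_nat j * curl_pt u q"
proof -
  have shift: "curl_pt u (m + q) = curl_pt u m + curl_pt u q" for m
    by (induction m) (simp_all add: curl_pt_Suc circ_period)
  show ?thesis
  proof (induction j)
    case (Suc j)
    have "curl_pt u (n + Suc j * q) = curl_pt u ((n + j * q) + q)"
      by (simp add: algebra_simps)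
    also have "\<dots> = curl_pt u (n + j * q) + curl_pt u q"
      by (rule shift)
    finally show ?case
      using Suc.IH by (simp add: algebra_simps)
  qed simp
qed

lemma curl_pt_mod_period:
  assumes "curl_pt u q = 0"
  shows "curl_pt u n = curl_pt u (n mod q)"
  using curl_pt_add_mult_period[of "n mod q" "n div q"] assms by simp

lemma closed_curlicue_eq:
  assumes "curl_pt u q = 0"
  shows "curlicue u = (\<Union>n<q. closed_segment (curl_pt u n) (curl_pt u (Suc n)))"
proof
  show "curlicue u \<subseteq> (\<Union>n<q. closed_segment (curl_pt u n) (curl_pt u (Suc n)))"
  proof
    fix z assume "z \<in> curlicue u"
    then obtain m where "z \<in> closed_segment (curl_pt u m) (curl_pt u (Suc m))"
      unfolding curlicue_def by blast
    moreover have "curl_pt u m = curl_pt u (m mod q)"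
      and "curl_pt u (Suc m) = curl_pt u (Suc (m mod q))"
      using curl_pt_mod_period[OF assms, of m] curl_pt_mod_period[OF assms, of "Suc m"]
        curl_pt_mod_period[OF assms, of "Suc (m mod q)"] by (simp_all add: mod_Suc_eq)
    moreover have "m mod q < q"
      using period_pos by simp
    ultimately show "z \<in> (\<Union>n<q. closed_segment (curl_pt u n) (curl_pt u (Suc n)))"
      by (intro UN_I[of "m mod q"]) simp_all
  qed
  show "(\<Union>n<q. closed_segment (curl_pt u n) (curl_pt u (Suc n))) \<subseteq> curlicue u"
    unfolding curlicue_def by blast
qed

lemma bounded_curlicue_iff_closed: "bounded (curlicue u) \<longleftrightarrow> curl_pt u q = 0"
proof
  assume "bounded (curlicue u)"
  then obtain B where B: "\<And>z. z \<in> curlicue u \<Longrightarrow> norm z \<le> B"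
    unfolding bounded_iff by blast
  have "real j * norm (curl_pt u q) \<le> B" for j
    using B[OF curl_pt_in_curlicue[of u "0 + j * q"]] curl_pt_add_mult_period[of 0 j]
    by (simp add: norm_mult)
  then show "curl_pt u q = 0"
    using reals_Archimedean3[of "norm (curl_pt u q)"] by (auto simp: not_less[symmetric])
next
  assume "curl_pt u q = 0"
  then show "bounded (curlicue u)"
    unfolding closed_curlicue_eq[OF \<open>curl_pt u q = 0\<close>]
    by (intro bounded_UN ballI bounded_closed_segment finite_lessThan)
qed

lemma measure_nbhd_closed_curlicue_le:
  assumes closed: "curl_pt u q = 0" and e: "0 < e" "e \<le> 1"
  shows "measure lebesgue (nbhd (curlicue u) e) \<le> 12 * pi * real q * e"
proof -
  let ?seg = "\<lambda>n. closed_segment (curl_pt u n) (curl_pt u (Suc n))"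
  have "measure lebesgue (nbhd (curlicue u) e) \<le> (\<Sum>n<q. measure lebesgue (nbhd (?seg n) e))"
    unfolding closed_curlicue_eq[OF closed] nbhd_UN
    by (intro measure_UNION_le fmeasurableD[OF lmeasurable_nbhd[OF bounded_closed_segment]]) simp
  also have "\<dots> \<le> (\<Sum>n<q. 12 * pi * e)"
    by (intro sum_mono measure_nbhd_unit_segment_le) (use e in \<open>simp_all add: curl_pt_Suc\<close>)
  finally show ?thesis by (simp add: algebra_simps)
qed

lemma diameter_curl_init_ge:
  assumes "curl_pt u q \<noteq> 0" and t: "2 * real q \<le> t"
  shows "t / (2 * real q) * norm (curl_pt u q) \<le> diameter (curl_init u t)"
proof -
  define j where "j = nat \<lfloor>t / real q\<rfloor>"
  have "real j \<le> t / real q" "t / real q < real j + 1"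
    unfolding j_def using t period_pos by auto
  then have "real (j * q) \<le> t" "t / (2 * real q) \<le> real j"
    using t period_pos by (simp_all add: field_simps)
  have "curl_pt u (0 + j * q) \<in> curl_init u t"
    using \<open>real (j * q) \<le> t\<close> by (simp add: curl_pt_in_curl_init)
  moreover have "0 \<in> curl_init u t"
    using curl_pt_in_curl_init[of 0 t u] t by simp
  ultimately have "dist 0 (of_nat j * curl_pt u q) \<le> diameter (curl_init u t)"
    unfolding curl_pt_add_mult_period by (intro diameter_bounded_bound[OF bounded_curl_init]) simp_all
  moreover have "t / (2 * real q) * norm (curl_pt u q) \<le> real j * norm (curl_pt u q)"
    using \<open>t / (2 * real q) \<le> real j\<close> by (rule mult_right_mono) simp
  ultimately show ?thesis
    by (simp add: norm_mult)
qed

text \<open>A closed curlicue is a \<open>q\<close>-gon, whose \<open>e\<close>-neighbourhood has area \<open>O(e)\<close>; an open one is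
  translated by \<open>z q\<close> every \<open>q\<close> steps, so its diameter grows linearly with its length.\<close>
lemma not_superficial: "\<not> superficial u"
proof (cases "curl_pt u q = 0")
  case True
  have "\<forall>\<^sub>F e in at_right 0. measure lebesgue (nbhd (curlicue u) e) / e \<le> 12 * pi * real q"
  proof (rule eventually_mono)
    show "\<forall>\<^sub>F e in at_right (0::real). 0 < e \<and> e \<le> 1"
      by (auto simp: eventually_at_right_field intro: exI[of _ 1])
  next
    fix e :: real assume "0 < e \<and> e \<le> 1"
    then show "measure lebesgue (nbhd (curlicue u) e) / e \<le> 12 * pi * real q"
      using measure_nbhd_closed_curlicue_le[OF True, of e] by (simp add: pos_divide_le_eq)
  qed
  then show ?thesis
    unfolding superficial_def using True bounded_curlicue_iff_closed
    by (simp add: not_filterlim_at_top_if_eventually_le)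
next
  case False
  have "\<forall>\<^sub>F t in at_top. t / diameter (curl_init u t) \<le> 2 * real q / norm (curl_pt u q)"
    using eventually_ge_at_top[of "2 * real q"]
  proof (rule eventually_mono)
    fix t assume t: "2 * real q \<le> t"
    then have pos: "0 < t / (2 * real q) * norm (curl_pt u q)"
      using False period_pos by simp
    have "t / diameter (curl_init u t) \<le> t / (t / (2 * real q) * norm (curl_pt u q))"
      using t by (intro frac_le[OF _ order_refl pos diameter_curl_init_ge[OF False t]]) simp
    also have "\<dots> = 2 * real q / norm (curl_pt u q)"
      using t period_pos by (simp add: field_simps)
    finally show "t / diameter (curl_init u t) \<le> 2 * real q / norm (curl_pt u q)" .
  qed
  then show ?thesis
    unfolding superficial_def using False bounded_curlicue_iff_closed
    by (simp add: not_filterlim_at_top_if_eventually_le)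
qed

lemma curl_pt_period_eq_0_if_constant_turn:
  assumes turn: "\<And>n. circ (u (Suc n)) = c * circ (u n)" and "c \<noteq> 1"
  shows "curl_pt u q = 0"
proof -
  have pow: "circ (u k) = c ^ k * circ (u 0)" for k
    by (induction k) (simp_all add: turn)
  have "c ^ q = 1"
    using pow[of q] circ_period[of 0] by simp
  have "curl_pt u q = (\<Sum>k<q. c ^ k * circ (u 0))"
    unfolding curl_pt_def by (intro sum.cong refl pow)
  also have "\<dots> = (\<Sum>k<q. c ^ k) * circ (u 0)"
    by (simp add: sum_distrib_right)
  also have "\<dots> = 0"
    using geometric_sum[OF \<open>c \<noteq> 1\<close>, of q] \<open>c ^ q = 1\<close> by simp
  finally show ?thesis .
qed

lemma regular_polygon_iff_constant_turn:
  assumes "circ (u 1) \<noteq> circ (u 0)"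
  shows "regular_polygon u \<longleftrightarrow> (\<forall>k\<ge>1. frac (u k - u (k - 1)) = frac (u 1 - u 0))"
proof -
  define c where "c = circ (u 1) / circ (u 0)"
  have "c \<noteq> 1"
    using assms by (simp add: c_def)
  have turn_iff: "(\<exists>c'. \<forall>n. circ (u (Suc n)) = c' * circ (u n)) \<longleftrightarrow>
      (\<forall>n. circ (u (Suc n)) = c * circ (u n))"
  proof
    assume "\<exists>c'. \<forall>n. circ (u (Suc n)) = c' * circ (u n)"
    then obtain c' where c': "\<And>n. circ (u (Suc n)) = c' * circ (u n)"
      by blast
    then have "c' = c"
      using c'[of 0] by (simp add: c_def)
    with c' show "\<forall>n. circ (u (Suc n)) = c * circ (u n)"
      by simp
  qed blast
  have from_1: "(\<forall>k\<ge>1. Q k) \<longleftrightarrow> (\<forall>n. Q (Suc n))" for Q :: "nat \<Rightarrow> bool"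
    by (auto dest: Suc_le_D)
  have "(\<forall>k\<ge>1. frac (u k - u (k - 1)) = frac (u 1 - u 0)) \<longleftrightarrow>
        (\<forall>n. circ (u (Suc n) - u n) = circ (u 1 - u 0))"
    unfolding frac_eq_iff_circ_eq from_1 by simp
  also have "\<dots> \<longleftrightarrow> (\<forall>n. circ (u (Suc n)) = c * circ (u n))"
    unfolding c_def circ_diff by (simp add: field_simps)
  moreover have "curl_pt u (n + q) = curl_pt u n"
    if "\<forall>n. circ (u (Suc n)) = c * circ (u n)" for n
    using curl_pt_period_eq_0_if_constant_turn[of c] that \<open>c \<noteq> 1\<close> curl_pt_add_mult_period[of n 1]
    by simp
  ultimately show ?thesis
    unfolding regular_polygon_def using turn_iff period_pos by blast
qed

end

section \<open>Bounded curlicues with infinitely many directions\<close>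

lemma square_eq_if_Im_mult_cnj_eq_0:
  fixes v w :: complex
  assumes v: "norm v = 1" and w: "norm w = 1" and Im: "Im (v * cnj w) = 0"
  shows "v\<^sup>2 = w\<^sup>2"
proof -
  define r where "r = Re (v * cnj w)"
  have "w * cnj w = 1"
    using complex_norm_square[of w] w by simp
  then have "v = (v * cnj w) * w"
    by (simp add: algebra_simps)
  also have "v * cnj w = of_real r"
    using Im by (simp add: r_def complex_eq_iff)
  finally have v_eq: "v = of_real r * w" .
  then have "\<bar>r\<bar> = 1"
    using v w by (simp add: norm_mult)
  then have "r\<^sup>2 = 1"
    by (simp add: power2_eq_1_iff abs_if split: if_splits)
  then show ?thesis
    by (simp add: v_eq power_mult_distrib flip: of_real_power)
qed

text \<open>Squaring identifies exactly the parallel directions and is at most two-to-one on an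
  injective sequence, so infinitely many distinct squares occur.\<close>
lemma exists_pairwise_nonparallel:
  fixes v :: "nat \<Rightarrow> complex"
  assumes inj: "inj v" and unit: "\<And>n. norm (v n) = 1"
  shows "\<exists>I. finite I \<and> card I = M \<and> (\<forall>i\<in>I. \<forall>j\<in>I. i \<noteq> j \<longrightarrow> Im (v i * cnj (v j)) \<noteq> 0)"
proof -
  define S where "S n = (v n)\<^sup>2" for n
  have "finite (S -` {S i})" for i
  proof -
    have "S -` {S i} \<subseteq> v -` {v i, - v i}"
      by (auto simp: S_def power2_eq_iff)
    moreover have "finite (v -` {v i, - v i})"
      using inj by (intro finite_vimageI) auto
    ultimately show ?thesis
      by (rule finite_subset)
  qed
  have "infinite (range S)"
  proof
    assume "finite (range S)"
    with \<open>\<And>i. finite (S -` {S i})\<close> have "finite (\<Union>w\<in>range S. S -` {w})"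
      by (intro finite_UN_I) auto
    moreover have "(\<Union>w\<in>range S. S -` {w}) = UNIV"
      by auto
    ultimately show False
      by simp
  qed
  then obtain W where W: "finite W" "card W = M" "W \<subseteq> range S"
    using infinite_arbitrarily_large by blast
  then obtain I where I: "inj_on S I" "W = S ` I"
    using subset_image_inj by metis
  have "\<forall>i\<in>I. \<forall>j\<in>I. i \<noteq> j \<longrightarrow> Im (v i * cnj (v j)) \<noteq> 0"
    using I(1) square_eq_if_Im_mult_cnj_eq_0[OF unit unit] unfolding S_def inj_on_def by metis
  with I W show ?thesis
    by (metis card_image finite_image_iff)
qed

lemma finite_pairs_uniform_lower_bound:
  fixes f :: "'a \<Rightarrow> 'a \<Rightarrow> real"
  assumes "finite I" and "\<And>i j. i \<in> I \<Longrightarrow> j \<in> I \<Longrightarrow> i \<noteq> j \<Longrightarrow> f i j \<noteq> 0"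
  shows "\<exists>\<sigma>>0. \<forall>i\<in>I. \<forall>j\<in>I. i \<noteq> j \<longrightarrow> \<sigma> \<le> \<bar>f i j\<bar>"
proof -
  define \<sigma> where "\<sigma> = Min (insert 1 ((\<lambda>(i, j). \<bar>f i j\<bar>) ` (SIGMA i:I. I - {i})))"
  have "finite (SIGMA i:I. I - {i})"
    using assms(1) by auto
  then have "0 < \<sigma> \<and> (\<forall>i\<in>I. \<forall>j\<in>I. i \<noteq> j \<longrightarrow> \<sigma> \<le> \<bar>f i j\<bar>)"
    unfolding \<sigma>_def using assms(2) by (auto intro: Min_le)
  then show ?thesis
    by blast
qed

lemma card_le_Suc_if_spread_le:
  fixes S :: "nat set"
  assumes "finite S" and spread: "\<And>k l. k \<in> S \<Longrightarrow> l \<in> S \<Longrightarrow> l \<le> k + b"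
  shows "card S \<le> b + 1"
proof (cases "S = {}")
  case False
  then have "Min S \<in> S"
    using assms(1) by simp
  then have "S \<subseteq> {Min S..Min S + b}"
    using assms(1) spread by auto
  then show ?thesis
    using card_mono[of "{Min S..Min S + b}" S] by simp
qed simp

lemma card_affine_near_zero_le:
  fixes \<alpha> \<beta> d \<sigma> :: real
  assumes d: "0 < d" and \<sigma>: "0 < \<sigma>" "\<sigma> \<le> \<bar>\<beta>\<bar>"
  shows "card {k. k < K \<and> \<bar>\<alpha> + d * real k * \<beta>\<bar> \<le> d / 2} \<le> nat \<lfloor>1 / \<sigma>\<rfloor> + 1"
proof (rule card_le_Suc_if_spread_le)
  fix k l assume "k \<in> {k. k < K \<and> \<bar>\<alpha> + d * real k * \<beta>\<bar> \<le> d / 2}"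
    and "l \<in> {k. k < K \<and> \<bar>\<alpha> + d * real k * \<beta>\<bar> \<le> d / 2}"
  then have near: "\<bar>\<alpha> + d * real k * \<beta>\<bar> \<le> d / 2" "\<bar>\<alpha> + d * real l * \<beta>\<bar> \<le> d / 2"
    by simp_all
  have "d * ((real l - real k) * \<beta>) = (\<alpha> + d * real l * \<beta>) - (\<alpha> + d * real k * \<beta>)"
    by (simp add: algebra_simps)
  then have "\<bar>d * ((real l - real k) * \<beta>)\<bar> \<le> \<bar>\<alpha> + d * real l * \<beta>\<bar> + \<bar>\<alpha> + d * real k * \<beta>\<bar>"
    by (simp only: abs_triangle_ineq4)
  then have "d * \<bar>(real l - real k) * \<beta>\<bar> \<le> d * 1"
    using near by (simp only: abs_mult abs_of_pos[OF d])
  then have "\<bar>real l - real k\<bar> * \<bar>\<beta>\<bar> \<le> 1"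
    using d by (simp only: mult_le_cancel_left_pos abs_mult)
  moreover have "\<bar>real l - real k\<bar> * \<sigma> \<le> \<bar>real l - real k\<bar> * \<bar>\<beta>\<bar>"
    using \<sigma> by (simp add: mult_left_mono)
  ultimately have "\<bar>real l - real k\<bar> * \<sigma> \<le> 1"
    by linarith
  then have "\<bar>real l - real k\<bar> \<le> 1 / \<sigma>"
    using \<sigma> by (simp add: pos_le_divide_eq)
  then have "real l - real k \<le> 1 / \<sigma>"
    by linarith
  then show "l \<le> k + nat \<lfloor>1 / \<sigma>\<rfloor>"
    by linarith
qed simp

lemma card_Sigma_avoiding_ge:
  assumes I: "finite I" and A: "finite A"
    and T: "\<And>i j. i \<in> I \<Longrightarrow> j \<in> I \<Longrightarrow> i \<noteq> j \<Longrightarrow> card (A \<inter> T i j) \<le> b"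
  shows "card I * card A \<le> card (SIGMA i:I. A - (\<Union>j\<in>I - {i}. T i j)) + card I * card I * b"
proof -
  have "card A \<le> card (A - (\<Union>j\<in>I - {i}. T i j)) + card I * b" if "i \<in> I" for i
  proof -
    have "card (A \<inter> (\<Union>j\<in>I - {i}. T i j)) \<le> (\<Sum>j\<in>I - {i}. card (A \<inter> T i j))"
      unfolding Int_UN_distrib using I by (rule card_UN_le[OF finite_Diff])
    also have "\<dots> \<le> (\<Sum>j\<in>I. b)"
      using T that I by (intro sum_le_included[where i=id]) auto
    finally show ?thesis
      using card_Int_Diff[OF A, of "\<Union>j\<in>I - {i}. T i j"] by simp
  qed
  then have "(\<Sum>i\<in>I. card A) \<le> (\<Sum>i\<in>I. card (A - (\<Union>j\<in>I - {i}. T i j)) + card I * b)"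
    by (intro sum_mono)
  then show ?thesis
    using I A by (simp add: sum.distrib)
qed

lemma abs_Im_mult_cnj_le_dist:
  assumes "norm v = 1"
  shows "\<bar>Im ((z - a) * cnj v)\<bar> \<le> dist z (a + of_real t * v)"
proof -
  have "v * cnj v = 1"
    using complex_norm_square[of v] assms by simp
  then have "(z - a) * cnj v = (z - (a + of_real t * v)) * cnj v + of_real t"
    by (simp add: algebra_simps)
  then have "Im ((z - a) * cnj v) = Im ((z - (a + of_real t * v)) * cnj v)"
    by simp
  also have "\<bar>\<dots>\<bar> \<le> norm ((z - (a + of_real t * v)) * cnj v)"
    by (rule abs_Im_le_cmod)
  finally show ?thesis
    using assms by (simp add: norm_mult dist_norm)
qed

lemma measure_nbhd_ge_packing:
  fixes S P :: "complex set"
  assumes S: "bounded S" and P: "finite P" "P \<subseteq> S" and e: "0 \<le> e"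
    and sep: "\<And>x y. x \<in> P \<Longrightarrow> y \<in> P \<Longrightarrow> x \<noteq> y \<Longrightarrow> 2 * e \<le> dist x y"
  shows "real (card P) * (e\<^sup>2 * pi) \<le> measure lebesgue (nbhd S e)"
proof -
  have "pairwise (\<lambda>x y. disjnt (ball x e) (ball y e)) P"
    unfolding pairwise_def disjnt_def
    using sep dist_triangle_less_add[of _ _ e _ e] by (fastforce simp: dist_commute)
  then have "measure lebesgue (\<Union>x\<in>P. ball x e) = (\<Sum>x\<in>P. measure lebesgue (ball x e))"
    using P by (intro measure_UNION') auto
  also have "\<dots> = real (card P) * (e\<^sup>2 * pi)"
    using e by (simp only: measure_ball_complex sum_constant)
  finally have "measure lebesgue (\<Union>x\<in>P. ball x e) = real (card P) * (e\<^sup>2 * pi)" .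
  moreover have "(\<Union>x\<in>P. ball x e) \<subseteq> nbhd S e"
    using P unfolding nbhd_def by auto
  then have "measure lebesgue (\<Union>x\<in>P. ball x e) \<le> measure lebesgue (nbhd S e)"
    using P by (intro measure_mono_fmeasurable lmeasurable_nbhd S) auto
  ultimately show ?thesis
    by simp
qed

text \<open>Points spaced \<open>4 e\<close> apart along segment \<open>i\<close> are discarded when they lie within \<open>2 e\<close> of the
  line through another segment \<open>j\<close> (the distance to that line is \<open>\<bar>Im ((z - a j) * cnj (v j))\<bar>\<close>).
  The remaining points are \<open>2 e\<close>-separated, and since the segments are pairwise nonparallel,
  only \<open>O(1/\<sigma>)\<close> points are discarded per pair of segments.\<close>
locale segment_grid =
  fixes a v :: "nat \<Rightarrow> complex" and I :: "nat set" and \<sigma> e :: real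
  assumes finite_I: "finite I" and unit: "\<And>i. i \<in> I \<Longrightarrow> norm (v i) = 1"
    and \<sigma>_pos: "0 < \<sigma>"
    and nonparallel: "\<And>i j. i \<in> I \<Longrightarrow> j \<in> I \<Longrightarrow> i \<noteq> j \<Longrightarrow> \<sigma> \<le> \<bar>Im (v i * cnj (v j))\<bar>"
    and e_pos: "0 < e"
begin

definition steps :: nat where
  "steps = nat \<lfloor>1 / (4 * e)\<rfloor>"

definition grid_point :: "nat \<times> nat \<Rightarrow> complex" where
  "grid_point = (\<lambda>(i, k). a i + of_real (4 * e * real k) * v i)"

definition near_line :: "nat \<Rightarrow> nat \<Rightarrow> nat set" where
  "near_line i j = {k. \<bar>Im ((grid_point (i, k) - a j) * cnj (v j))\<bar> \<le> 2 * e}"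

definition good_points :: "(nat \<times> nat) set" where
  "good_points = (SIGMA i:I. {..<steps} - (\<Union>j\<in>I - {i}. near_line i j))"

lemma grid_step_le_1:
  assumes "k < steps"
  shows "4 * e * real k \<le> 1"
proof -
  have "real k \<le> real steps"
    using assms by simp
  also have "\<dots> \<le> 1 / (4 * e)"
    unfolding steps_def using e_pos by (simp add: of_nat_nat)
  finally show ?thesis
    using e_pos by (simp add: pos_le_divide_eq mult.commute)
qed

lemma card_near_line_le:
  assumes "i \<in> I" "j \<in> I" "i \<noteq> j"
  shows "card ({..<steps} \<inter> near_line i j) \<le> nat \<lfloor>1 / \<sigma>\<rfloor> + 1"
proof -
  have "{..<steps} \<inter> near_line i j = {k. k < steps \<and>
      \<bar>Im ((a i - a j) * cnj (v j)) + 4 * e * real k * Im (v i * cnj (v j))\<bar> \<le> 4 * e / 2}"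
    unfolding near_line_def grid_point_def by (auto simp: algebra_simps)
  also have "card \<dots> \<le> nat \<lfloor>1 / \<sigma>\<rfloor> + 1"
    using e_pos \<sigma>_pos nonparallel[OF assms] by (intro card_affine_near_zero_le) simp_all
  finally show ?thesis .
qed

lemma card_good_points_ge:
  "real (card I) * (1 / (4 * e) - 1) - (real (card I))\<^sup>2 * (1 / \<sigma> + 1) \<le> card good_points"
proof -
  define B where "B = nat \<lfloor>1 / \<sigma>\<rfloor>"
  have "card I * card {..<steps} \<le> card good_points + card I * card I * (B + 1)"
    unfolding good_points_def B_def
    by (rule card_Sigma_avoiding_ge[OF finite_I finite_lessThan card_near_line_le])
  then have "real (card I * steps) \<le> real (card good_points + card I * card I * (B + 1))"
    by (simp only: of_nat_le_iff card_lessThan)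
  then have "real (card I) * real steps \<le> real (card good_points) + (real (card I))\<^sup>2 * (real B + 1)"
    by (simp add: power2_eq_square algebra_simps)
  moreover have "real (card I) * (1 / (4 * e) - 1) \<le> real (card I) * real steps"
    unfolding steps_def using e_pos by (intro mult_left_mono) linarith+
  moreover have "(real (card I))\<^sup>2 * (real B + 1) \<le> (real (card I))\<^sup>2 * (1 / \<sigma> + 1)"
  proof (rule mult_left_mono)
    show "real B + 1 \<le> 1 / \<sigma> + 1"
      unfolding B_def using \<sigma>_pos by (simp add: of_nat_nat)
  qed simp
  ultimately show ?thesis
    by linarith
qed

lemma good_points_separated:
  assumes g: "g \<in> good_points" and h: "h \<in> good_points" and "g \<noteq> h"
  shows "2 * e \<le> dist (grid_point g) (grid_point h)"
proof -
  obtain i k j l where gh: "g = (i, k)" "h = (j, l)"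
    by fastforce
  show ?thesis
  proof (cases "i = j")
    case True
    have "i \<in> I"
      using g gh unfolding good_points_def by auto
    have "grid_point g - grid_point h = of_real (4 * e * (real k - real l)) * v i"
      using gh True by (simp add: grid_point_def algebra_simps)
    then have "dist (grid_point g) (grid_point h) = 4 * e * \<bar>real k - real l\<bar>"
      using unit[OF \<open>i \<in> I\<close>] e_pos
      by (simp only: dist_norm norm_mult norm_of_real) (simp add: abs_mult)
    moreover have "1 \<le> \<bar>real k - real l\<bar>"
      using \<open>g \<noteq> h\<close> gh True by auto
    ultimately show ?thesis
      using e_pos by simp
  next
    case False
    then have "j \<in> I" "k \<notin> near_line i j"
      using g h gh unfolding good_points_def by auto
    then have "2 * e < \<bar>Im ((grid_point g - a j) * cnj (v j))\<bar>"
      unfolding near_line_def gh by (simp add: not_le)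
    also have "\<dots> \<le> dist (grid_point g) (a j + of_real (4 * e * real l) * v j)"
      by (rule abs_Im_mult_cnj_le_dist[OF unit[OF \<open>j \<in> I\<close>]])
    also have "\<dots> = dist (grid_point g) (grid_point h)"
      by (simp add: gh grid_point_def)
    finally show ?thesis
      by simp
  qed
qed

lemma measure_nbhd_ge:
  assumes S: "bounded S"
    and segments: "\<And>i s. i \<in> I \<Longrightarrow> 0 \<le> s \<Longrightarrow> s \<le> 1 \<Longrightarrow> a i + of_real s * v i \<in> S"
  shows "pi * (real (card I) / 4 - (real (card I) + (real (card I))\<^sup>2 * (1 / \<sigma> + 1)) * e) \<le> measure lebesgue (nbhd S e) / e"
proof -
  have "grid_point ` good_points \<subseteq> S"
  proof
    fix z assume "z \<in> grid_point ` good_points"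
    then obtain i k where "i \<in> I" "k < steps" "z = grid_point (i, k)"
      unfolding good_points_def by auto
    then show "z \<in> S"
      using segments[OF \<open>i \<in> I\<close>, of "4 * e * real k"] grid_step_le_1 e_pos
      by (simp add: grid_point_def)
  qed
  moreover have "finite good_points"
    unfolding good_points_def using finite_I by auto
  moreover have "2 * e \<le> dist y z"
    if y: "y \<in> grid_point ` good_points" and z: "z \<in> grid_point ` good_points" and "y \<noteq> z"
    for y z
  proof -
    obtain g h where "g \<in> good_points" "h \<in> good_points" "y = grid_point g" "z = grid_point h"
      using y z by blast
    with \<open>y \<noteq> z\<close> show ?thesis
      using good_points_separated by blast
  qed
  ultimately have "real (card (grid_point ` good_points)) * (e\<^sup>2 * pi) \<le> measure lebesgue (nbhd S e)"
    using e_pos by (intro measure_nbhd_ge_packing[OF S]) auto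
  moreover have "inj_on grid_point good_points"
  proof (rule inj_onI, rule ccontr)
    fix g h assume "g \<in> good_points" "h \<in> good_points" "grid_point g = grid_point h" "g \<noteq> h"
    then show False
      using good_points_separated[of g h] e_pos by simp
  qed
  ultimately have "real (card good_points) * e * pi \<le> measure lebesgue (nbhd S e) / e"
    using e_pos by (simp add: card_image pos_le_divide_eq power2_eq_square algebra_simps)
  moreover have "pi * (real (card I) / 4 - (real (card I) + (real (card I))\<^sup>2 * (1 / \<sigma> + 1)) * e)
      = (real (card I) * (1 / (4 * e) - 1) - (real (card I))\<^sup>2 * (1 / \<sigma> + 1)) * e * pi"
    using e_pos by (simp add: field_simps)
  ultimately show ?thesis
    using card_good_points_ge e_pos by (smt (verit) mult_right_mono pi_gt_zero)
qed

end

lemma superficial_if_inj_directions: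
  assumes inj: "inj (\<lambda>n. circ (u n))" and bounded: "bounded (curlicue u)"
  shows "superficial u"
proof -
  have "\<forall>\<^sub>F e in at_right 0. Z \<le> measure lebesgue (nbhd (curlicue u) e) / e" for Z
  proof -
    obtain M :: nat where M: "4 * Z / pi < real M"
      using reals_Archimedean2 by blast
    obtain I where I: "finite I" "card I = M"
      and nonpar: "\<forall>i\<in>I. \<forall>j\<in>I. i \<noteq> j \<longrightarrow> Im (circ (u i) * cnj (circ (u j))) \<noteq> 0"
      using exists_pairwise_nonparallel[OF inj norm_circ] by blast
    obtain \<sigma> where \<sigma>: "0 < \<sigma>"
      "\<And>i j. i \<in> I \<Longrightarrow> j \<in> I \<Longrightarrow> i \<noteq> j \<Longrightarrow> \<sigma> \<le> \<bar>Im (circ (u i) * cnj (circ (u j)))\<bar>"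
      using finite_pairs_uniform_lower_bound[OF I(1), of "\<lambda>i j. Im (circ (u i) * cnj (circ (u j)))"]
        nonpar by blast
    define D where "D = real M + (real M)\<^sup>2 * (1 / \<sigma> + 1)"
    have "((\<lambda>e. pi * (real M / 4 - D * e)) \<longlongrightarrow> pi * (real M / 4 - D * 0)) (at_right 0)"
      by (intro tendsto_intros)
    moreover have "Z < pi * (real M / 4 - D * 0)"
      using M pi_gt_zero by (simp add: field_simps)
    ultimately have "\<forall>\<^sub>F e in at_right 0. Z < pi * (real M / 4 - D * e)"
      by (rule order_tendstoD)
    moreover have "\<forall>\<^sub>F e in at_right 0. pi * (real M / 4 - D * e) \<le> measure lebesgue (nbhd (curlicue u) e) / e"
      using eventually_at_right_less[of 0]
    proof (rule eventually_mono)
      fix e :: real assume "0 < e"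
      then have grid: "segment_grid (\<lambda>i. circ (u i)) I \<sigma> e"
        using I(1) \<sigma> by unfold_locales simp_all
      have "pi * (real (card I) / 4 - (real (card I) + (real (card I))\<^sup>2 * (1 / \<sigma> + 1)) * e)
          \<le> measure lebesgue (nbhd (curlicue u) e) / e"
        by (rule segment_grid.measure_nbhd_ge[OF grid bounded edge_point_in_curlicue])
      then show "pi * (real M / 4 - D * e) \<le> measure lebesgue (nbhd (curlicue u) e) / e"
        unfolding D_def I(2) .
    qed
    ultimately show ?thesis
      by eventually_elim simp
  qed
  then show ?thesis
    unfolding superficial_def filterlim_at_top using bounded by simp
qed

theorem proposition2p12:
  fixes \<phi> :: "complex \<Rightarrow> complex" and \<Phi> :: "real \<Rightarrow> real" and p q :: nat and x0 :: real
  assumes homeo: "\<exists>\<psi>. homeomorphism (sphere 0 1) (sphere 0 1) \<phi> \<psi>"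
    and lift: "is_oplift \<phi> \<Phi>"
    and q: "q > 0" "p < q" "coprime p q"
    and rho: "rotation_number \<Phi> = real p / real q"
    and semi: "\<not> conj_to_rotation \<phi> (real p / real q)"
  shows "(periodic_point \<phi> (circ x0) \<longrightarrow>
            ((((1 / real q) * (\<Sum>k<q. circ ((\<Phi> ^^ k) x0)) = 0) \<longleftrightarrow> bounded (curlicue (\<lambda>n. (\<Phi> ^^ n) x0))) \<and>
             (bounded (curlicue (\<lambda>n. (\<Phi> ^^ n) x0)) \<longleftrightarrow> curl_pt (\<lambda>n. (\<Phi> ^^ n) x0) q = 0) \<and>
             \<not> superficial (\<lambda>n. (\<Phi> ^^ n) x0) \<and>
             (q \<ge> 2 \<longrightarrow>
               (regular_polygon (\<lambda>n. (\<Phi> ^^ n) x0) \<longleftrightarrow>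
                (\<forall>k\<ge>1. frac ((\<Phi> ^^ k) x0 - (\<Phi> ^^ (k - 1)) x0) = frac (\<Phi> x0 - x0))))))
       \<and> ((\<not> periodic_point \<phi> (circ x0) \<and> bounded (curlicue (\<lambda>n. (\<Phi> ^^ n) x0))) \<longrightarrow>
            superficial (\<lambda>n. (\<Phi> ^^ n) x0))"
proof -
  interpret rational_circle_lift \<phi> \<Phi> p q
    using lift q(1,3) rho unfolding is_oplift_def by unfold_locales auto
  let ?u = "\<lambda>n. (\<Phi> ^^ n) x0"
  have orbit: "periodic_curlicue ?u q" if "periodic_point \<phi> (circ x0)"
    using q(1) circ_orbit_periodic[OF that] by unfold_locales
  have mean: "(1 / real q) * (\<Sum>k<q. circ (?u k)) = 0 \<longleftrightarrow> curl_pt ?u q = 0"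
    using q(1) by (simp add: curl_pt_def)
  have turn: "circ (?u 1) \<noteq> circ (?u 0)" if "q \<ge> 2"
    using circ_lift_neq[OF that] by simp
  show ?thesis
    using periodic_curlicue.bounded_curlicue_iff_closed[OF orbit]
      periodic_curlicue.not_superficial[OF orbit]
      periodic_curlicue.regular_polygon_iff_constant_turn[OF orbit turn]
      mean superficial_if_inj_directions[OF inj_circ_orbit]
    by auto
qed

end
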